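(* The string rewriting system $W'=\{0_2\rhd\to 0_3\rhd\}\cup A\cup B$ is terminating.
   Context: An SRS induces $u\ell v\to urv$ for each rule $\ell\to r$; terminating means no infinite rewrite sequence. Alphabet $\{0_2,1_2,0_3,1_3,2_3,\lhd,\rhd\}$; $A=\{0_20_3\to0_30_2,\ 0_21_3\to0_31_2,\ 0_22_3\to1_30_2,\ 1_20_3\to1_31_2,\ 1_21_3\to2_30_2,\ 1_22_3\to2_31_2\}$; $B=\{\lhd0_3\to\lhd1_2,\ \lhd1_3\to\lhd0_20_2,\ \lhd2_3\to\lhd0_21_2\}$. *)

theory Defs
  imports Main
begin

text \<open>Alphabet: 0_2, 1_2, 0_3, 1_3, 2_3, left marker, right marker.\<close>
datatype sym = Z2 | O2 | Z3 | O3 | T3 | LM | RM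

type_synonym srs = "(sym list \<times> sym list) set"

definition rstep :: "srs \<Rightarrow> (sym list \<times> sym list) set" where
  "rstep R = {(u @ l @ v, u @ r @ v) | u l r v. (l, r) \<in> R}"

definition terminating :: "srs \<Rightarrow> bool" where
  "terminating R \<longleftrightarrow> \<not> (\<exists>f :: nat \<Rightarrow> sym list. \<forall>i. (f i, f (Suc i)) \<in> rstep R)"

definition A_rules :: srs where
  "A_rules = {([Z2, Z3], [Z3, Z2]), ([Z2, O3], [Z3, O2]), ([Z2, T3], [O3, Z2]),
              ([O2, Z3], [O3, O2]), ([O2, O3], [T3, Z2]), ([O2, T3], [T3, O2])}"

definition B_rules :: srs where
  "B_rules = {([LM, Z3], [LM, O2]), ([LM, O3], [LM, Z2, Z2]), ([LM, T3], [LM, Z2, O2])}"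

definition W'_rules :: srs where
  "W'_rules = {([Z2, RM], [Z3, RM])} \<union> A_rules \<union> B_rules"

end

theory Submission
  imports Defs "HOL-Computational_Algebra.Primes"
begin

text \<open>
  Every word is read left to right by a small automaton. After a \<open>\<lhd>\<close> it evaluates the
  symbols as digits of a mixed-radix number starting from 1 (binary symbols \<open>d\<^sub>2\<close> act as
  \<open>v \<mapsto> 2v + d\<close>, ternary ones as \<open>v \<mapsto> 3v + d\<close>); in a segment not opened by \<open>\<lhd>\<close> it merely
  counts binary symbols. At each marker and at the end of the word it emits the 2-adic
  valuation of the number, resp. the count. The rules of \<open>A\<close> and \<open>B\<close> compute the same number
  (e.g. \<open>2(3v) = 3(2v)\<close>, \<open>3\<cdot>1 = 2\<cdot>1 + 1\<close>), so the total emission is invariant under them,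
  whereas \<open>0\<^sub>2\<rhd> \<rightarrow> 0\<^sub>3\<rhd>\<close> replaces \<open>2v\<close> by \<open>3v\<close> (or one binary symbol by a ternary one) right
  before a marker and lowers it by one. Among steps that keep the emission, \<open>B\<close> decreases the
  number of ternary symbols, and \<open>A\<close> preserves it while decreasing the number of pairs of a
  binary symbol preceding a ternary one.
\<close>

lemma terminating_if_measure_decreases:
  fixes m :: "sym list \<Rightarrow> 'a"
  assumes "wf r"
    and decreases: "\<And>w w'. (w, w') \<in> rstep R \<Longrightarrow> (m w', m w) \<in> r"
  shows "terminating R"
  unfolding terminating_def
proof
  assume "\<exists>f. \<forall>i. (f i, f (Suc i)) \<in> rstep R"
  then obtain f where "\<forall>i. (f i, f (Suc i)) \<in> rstep R" by blast
  then have "\<forall>i. ((m \<circ> f) (Suc i), (m \<circ> f) i) \<in> r" using decreases by simp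
  then show False using \<open>wf r\<close> wf_iff_no_infinite_down_chain by blast
qed

lemma multiplicity_two_double:
  "v \<noteq> 0 \<Longrightarrow> multiplicity 2 (2 * v :: nat) = Suc (multiplicity 2 v)"
  by (simp add: multiplicity_times_same)

lemma multiplicity_two_triple: "multiplicity 2 (3 * v :: nat) = multiplicity 2 v"
proof (cases "v = 0")
  case False
  have "multiplicity 2 (3 :: nat) = 0" by (intro not_dvd_imp_multiplicity_0) simp
  then show ?thesis
    using False by (simp add: prime_elem_multiplicity_mult_distrib)
qed simp

fun is_binary :: "sym \<Rightarrow> nat" where
  "is_binary Z2 = 1" | "is_binary O2 = 1" | "is_binary _ = 0"

fun is_ternary :: "sym \<Rightarrow> nat" where
  "is_ternary Z3 = 1" | "is_ternary O3 = 1" | "is_ternary T3 = 1" | "is_ternary _ = 0"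

datatype state = Count nat | Number nat

fun step :: "state \<Rightarrow> sym \<Rightarrow> state" where
  "step s LM = Number 1"
| "step s RM = Count 0"
| "step (Count k) d = Count (k + is_binary d)"
| "step (Number v) Z2 = Number (2 * v)"
| "step (Number v) O2 = Number (2 * v + 1)"
| "step (Number v) Z3 = Number (3 * v)"
| "step (Number v) O3 = Number (3 * v + 1)"
| "step (Number v) T3 = Number (3 * v + 2)"

fun weight :: "state \<Rightarrow> nat" where
  "weight (Count k) = k" | "weight (Number v) = multiplicity 2 v"

fun emission :: "state \<Rightarrow> sym \<Rightarrow> nat" where
  "emission s LM = weight s" | "emission s RM = weight s" | "emission s _ = 0"

fun emitted :: "state \<Rightarrow> sym list \<Rightarrow> nat" where
  "emitted s [] = 0" | "emitted s (x # xs) = emission s x + emitted (step s x) xs"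

fun potential :: "state \<Rightarrow> sym list \<Rightarrow> nat" where
  "potential s [] = weight s" | "potential s (x # xs) = emission s x + potential (step s x) xs"

lemma potential_append:
  "potential s (u @ w) = emitted s u + potential (foldl step s u) w"
  by (induction u arbitrary: s) auto

fun valid :: "state \<Rightarrow> bool" where
  "valid (Count k) = True" | "valid (Number v) = (v > 0)"

lemma valid_foldl_step: "valid s \<Longrightarrow> valid (foldl step s u)"
proof (induction u arbitrary: s)
  case (Cons x u)
  then have "valid (step s x)" by (cases s; cases x) auto
  then show ?case using Cons.IH by simp
qed simp

lemma potential_A_rule: "(l, r) \<in> A_rules \<Longrightarrow> potential s (r @ v) = potential s (l @ v)"
  unfolding A_rules_def by (cases s) (auto simp: algebra_simps numeral_eq_Suc)

lemma potential_B_rule: "(l, r) \<in> B_rules \<Longrightarrow> potential s (r @ v) = potential s (l @ v)"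
  unfolding B_rules_def by (cases s) auto

lemma potential_marker_rule:
  "valid s \<Longrightarrow> potential s ([Z3, RM] @ v) < potential s ([Z2, RM] @ v)"
  by (cases s) (auto simp: multiplicity_two_double multiplicity_two_triple)

definition ternary_count :: "sym list \<Rightarrow> nat" where
  "ternary_count w = sum_list (map is_ternary w)"

definition binary_count :: "sym list \<Rightarrow> nat" where
  "binary_count w = sum_list (map is_binary w)"

fun inversions :: "sym list \<Rightarrow> nat" where
  "inversions [] = 0"
| "inversions (x # xs) = is_binary x * ternary_count xs + inversions xs"

lemma inversions_append:
  "inversions (u @ w) = inversions u + inversions w + binary_count u * ternary_count w"
  by (induction u) (auto simp: ternary_count_def binary_count_def algebra_simps)

definition W'_measure :: "sym list \<Rightarrow> nat \<times> nat \<times> nat" where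
  "W'_measure w = (potential (Count 0) w, ternary_count w, inversions w)"

lemma W'_measure_decreases:
  assumes "(w, w') \<in> rstep W'_rules"
  shows "(W'_measure w', W'_measure w) \<in> less_than <*lex*> less_than <*lex*> less_than"
proof -
  obtain u l r v where w: "w = u @ l @ v" "w' = u @ r @ v" and lr: "(l, r) \<in> W'_rules"
    using assms unfolding rstep_def by blast
  from lr consider "(l, r) = ([Z2, RM], [Z3, RM])" | "(l, r) \<in> A_rules" | "(l, r) \<in> B_rules"
    unfolding W'_rules_def by blast
  then show ?thesis
  proof cases
    case 1
    then have "potential (Count 0) w' < potential (Count 0) w"
      using w valid_foldl_step[of "Count 0" u] potential_marker_rule
      by (simp add: potential_append)
    then show ?thesis by (simp add: W'_measure_def)
  next
    case 2
    then have "potential (Count 0) w' = potential (Count 0) w"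
      using w potential_A_rule by (simp add: potential_append)
    moreover have "ternary_count r = ternary_count l" "binary_count r = binary_count l"
      "inversions r < inversions l"
      using 2 unfolding A_rules_def by (auto simp: ternary_count_def binary_count_def)
    then have "ternary_count w' = ternary_count w" "inversions w' < inversions w"
      using w by (simp_all add: inversions_append ternary_count_def binary_count_def)
    ultimately show ?thesis by (simp add: W'_measure_def)
  next
    case 3
    then have "potential (Count 0) w' = potential (Count 0) w"
      using w potential_B_rule by (simp add: potential_append)
    moreover have "ternary_count r < ternary_count l"
      using 3 unfolding B_rules_def by (auto simp: ternary_count_def)
    then have "ternary_count w' < ternary_count w"
      using w by (simp add: ternary_count_def)
    ultimately show ?thesis by (simp add: W'_measure_def)
  qed
qed

theorem mainTheorem9:
  shows "terminating W'_rules"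
  by (rule terminating_if_measure_decreases[OF _ W'_measure_decreases]) auto

end
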